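(* The class of $\tau_{\mathcal{I}}$-Świątkowski functions coincides with the class of $\tau_\ast$-Świątkowski functions.
   Context: $\tau_\ast=\{U\setminus M: U\text{ Euclidean open},\ M\text{ meager}\}$. $\tau_{\mathcal{I}}$ is the $\mathcal{I}$-density topology: for a set $A\subset\mathbb{R}$ with the Baire property, $x$ is an $\mathcal{I}$-density point of $A$ if for every increasing sequence $(n_m)$ of natural numbers there is a subsequence $(n_{m_p})$ such that the characteristic functions of $n_{m_p}\cdot(A-x)\cap[-1,1]$ converge to $1$ on $[-1,1]$ outside a meager set; $\tau_{\mathcal{I}}$ consists of the sets $A$ with the Baire property every point of which is an $\mathcal{I}$-density point of $A$. For a topology $\sigma$ and $f\colon\mathbb{R}\to\mathbb{R}$, $\mathrm{C}_\sigma(f)$ is the set of points at which $f\colon(\mathbb{R},\sigma)\to\mathbb{R}$ (Euclidean) is continuous, and $f$ is a $\sigma$-Świątkowski function if for all $a,b$ with $f(a)<f(b)$ there exists $x\in\mathrm{C}_\sigma(f)$ strictly between $a$ and $b$ with $f(a)<f(x)<f(b)$. *)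

theory Defs
  imports "HOL-Analysis.Analysis"
begin

definition nowhere_dense :: "real set \<Rightarrow> bool" where
  "nowhere_dense S \<longleftrightarrow> interior (closure S) = {}"

definition meager :: "real set \<Rightarrow> bool" where
  "meager M \<longleftrightarrow> (\<exists>F. countable F \<and> (\<forall>N\<in>F. nowhere_dense N) \<and> M = \<Union>F)"

definition baire_property :: "real set \<Rightarrow> bool" where
  "baire_property A \<longleftrightarrow> (\<exists>U M. open U \<and> meager M \<and> A = (U - M) \<union> (M - U))"

definition tau_star :: "real set set" where
  "tau_star = {U - M | U M. open U \<and> meager M}"

definition scale_shift :: "nat \<Rightarrow> real set \<Rightarrow> real \<Rightarrow> real set" where
  "scale_shift n A x = (\<lambda>a. real n * (a - x)) ` A"

definition I_density_point :: "real set \<Rightarrow> real \<Rightarrow> bool" where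
  "I_density_point A x \<longleftrightarrow>
     (\<forall>n :: nat \<Rightarrow> nat. strict_mono n \<longrightarrow>
        (\<exists>r :: nat \<Rightarrow> nat. strict_mono r \<and>
           (\<exists>M. meager M \<and>
              (\<forall>t\<in>{-1..1} - M.
                 (\<lambda>p. indicator (scale_shift (n (r p)) A x \<inter> {-1..1}) t :: real)
                   \<longlonglongrightarrow> 1))))"

definition tau_I :: "real set set" where
  "tau_I = {A. baire_property A \<and> (\<forall>x\<in>A. I_density_point A x)}"

definition cont_points :: "real set set \<Rightarrow> (real \<Rightarrow> real) \<Rightarrow> real set" where
  "cont_points \<sigma> f = {x. \<forall>W. open W \<and> f x \<in> W \<longrightarrow>
                          (\<exists>V\<in>\<sigma>. x \<in> V \<and> f ` V \<subseteq> W)}"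

definition swiatkowski :: "real set set \<Rightarrow> (real \<Rightarrow> real) \<Rightarrow> bool" where
  "swiatkowski \<sigma> f \<longleftrightarrow>
     (\<forall>a b. f a < f b \<longrightarrow>
        (\<exists>x\<in>cont_points \<sigma> f. min a b < x \<and> x < max a b \<and> f a < f x \<and> f x < f b))"

end

theory Submission
  imports Defs
begin

text \<open>
Since \<open>\<tau>\<^sub>\<ast> \<subseteq> \<tau>\<^sub>\<I>\<close>, every \<open>\<tau>\<^sub>\<ast>\<close>-continuity point is a \<open>\<tau>\<^sub>\<I>\<close>-continuity point.
Conversely, an \<open>\<I>\<close>-density point of \<open>A\<close> is never surrounded by a meager part of \<open>A\<close>,
so a \<open>\<tau>\<^sub>\<I>\<close>-open set \<open>V\<close> with a point in an interval contains \<open>U - M\<close> with \<open>U\<close> a nonempty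
open subset of the interval and \<open>M\<close> meager. For a \<open>\<tau>\<^sub>\<I>\<close>-Swiatkowski function this yields, in
every interval, an open set on which \<open>f\<close> oscillates by less than \<open>\<epsilon>\<close> off a meager set;
by the Baire category theorem the \<open>\<tau>\<^sub>\<ast>\<close>-continuity points are then comeager. Hence the
\<open>\<tau>\<^sub>\<I>\<close>-continuity point \<open>x\<close> between \<open>a\<close> and \<open>b\<close> can be replaced by a \<open>\<tau>\<^sub>\<ast>\<close>-continuity
point \<open>z \<in> U - M \<subseteq> V\<close>, where \<open>f z\<close> is still between \<open>f a\<close> and \<open>f b\<close>.
\<close>

lemma meager_subset: assumes "S \<subseteq> M" "meager M" shows "meager S"
proof -
  obtain F where F: "countable F" "\<forall>N\<in>F. nowhere_dense N" "M = \<Union>F"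
    using assms(2) unfolding meager_def by blast
  have "nowhere_dense (N \<inter> S)" if "N \<in> F" for N
  proof -
    have "interior (closure (N \<inter> S)) \<subseteq> interior (closure N)"
      by (intro interior_mono closure_mono) auto
    then show ?thesis using F(2) that unfolding nowhere_dense_def by blast
  qed
  moreover have "S = \<Union>((\<lambda>N. N \<inter> S) ` F)" using F(3) assms(1) by auto
  ultimately show ?thesis unfolding meager_def using F(1)
    by (intro exI[of _ "(\<lambda>N. N \<inter> S) ` F"]) auto
qed

lemma meager_UN: assumes "countable I" "\<And>i. i \<in> I \<Longrightarrow> meager (A i)"
  shows "meager (\<Union>i\<in>I. A i)"
proof -
  obtain F where F: "\<And>i. i \<in> I \<Longrightarrow> countable (F i) \<and> (\<forall>N\<in>F i. nowhere_dense N) \<and> A i = \<Union>(F i)"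
    using assms(2) unfolding meager_def by metis
  show ?thesis unfolding meager_def
    using F assms(1) by (intro exI[of _ "\<Union>i\<in>I. F i"]) auto
qed

lemma meager_Un: assumes "meager A" "meager B" shows "meager (A \<union> B)"
  using meager_UN[of "{A, B}" id] assms by auto

lemma meager_empty: "meager {}"
  unfolding meager_def by (intro exI[of _ "{}"]) auto

lemma nowhere_dense_imp_meager: "nowhere_dense N \<Longrightarrow> meager N"
  unfolding meager_def by (intro exI[of _ "{N}"]) auto

lemma open_not_meager: assumes "open U" "U \<noteq> {}" shows "\<not> meager U"
proof
  assume "meager U"
  then obtain F where F: "countable F" "\<forall>N\<in>F. nowhere_dense N" "U = \<Union>F"
    unfolding meager_def by blast
  define G where "G = (\<lambda>N. - closure N) ` F"
  have "UNIV \<subseteq> closure (\<Inter>G)"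
  proof (rule Baire)
    show "countable G" using F(1) G_def by simp
    fix T assume "T \<in> G"
    then obtain N where N: "N \<in> F" "T = - closure N" using G_def by auto
    then have "closure T = UNIV" using F(2) unfolding nowhere_dense_def
      by (simp add: closure_complement)
    then show "openin (top_of_set UNIV) T \<and> UNIV \<subseteq> closure T" using N by auto
  qed simp
  then have "\<Inter>G \<inter> U \<noteq> {}" using assms
    by (metis closure_iff_nhds_not_empty UNIV_I inf_commute subset_refl all_not_in_conv subset_antisym top_greatest)
  then obtain y N where "y \<in> N" "N \<in> F" "\<forall>T\<in>G. y \<in> T" using F(3) by auto
  then show False using G_def closure_subset by auto
qed

lemma nowhere_dense_affine_image: assumes "nowhere_dense N" "c \<noteq> 0"
  shows "nowhere_dense ((\<lambda>y. c * (y - x)) ` N)"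
proof -
  have lin: "linear ((*) c :: real \<Rightarrow> real)" by (simp add: linear_iff algebra_simps)
  have inj: "inj ((*) c :: real \<Rightarrow> real)" using assms(2) by (auto simp: inj_def)
  have eq: "(\<lambda>y. c * (y - x)) ` N = (*) c ` ((\<lambda>y. y - x) ` N)" by (auto simp: image_image)
  show ?thesis using assms(1) unfolding nowhere_dense_def eq
    by (simp add: closure_injective_linear_image[OF lin inj, symmetric]
       interior_injective_linear_image[OF lin inj] closure_translation_subtract
       interior_translation_subtract)
qed

lemma meager_affine_image: assumes "meager M" "c \<noteq> 0"
  shows "meager ((\<lambda>y. c * (y - x)) ` M)"
proof -
  obtain F where F: "countable F" "\<forall>N\<in>F. nowhere_dense N" "M = \<Union>F"
    using assms(1) unfolding meager_def by blast
  show ?thesis unfolding meager_def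
    using F nowhere_dense_affine_image[OF _ assms(2)]
    by (intro exI[of _ "(\<lambda>N. (\<lambda>y. c * (y - x)) ` N) ` F"]) auto
qed

lemma I_density_point_not_meager: assumes "I_density_point A x" "\<delta> > 0"
  shows "\<not> meager (A \<inter> ball x \<delta>)"
proof
  assume mA: "meager (A \<inter> ball x \<delta>)"
  obtain r M where r: "strict_mono r" and M: "meager M"
    and lim: "\<forall>t\<in>{-1..1} - M. (\<lambda>p. indicator (scale_shift (r p) A x \<inter> {-1..1}) t :: real) \<longlonglongrightarrow> 1"
    using assms(1) strict_mono_id unfolding I_density_point_def id_def by blast
  obtain K :: nat where K: "K > 0" "1 / real K < \<delta>"
    using assms(2) by (metis reals_Archimedean gr0I inverse_eq_divide of_nat_0_less_iff zero_less_Suc)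
  have rK: "r (p + K) \<ge> p + K" for p using seq_suble[OF r] by blast
  text \<open>For \<open>p \<ge> K\<close> the scaled copy of \<open>A\<close> meets \<open>[-1,1]\<close> only in the image of \<open>A \<inter> ball x \<delta>\<close>.\<close>
  define T where "T p = (\<lambda>a. real (r (p + K)) * (a - x)) ` (A \<inter> ball x \<delta>)" for p
  have "meager (T p)" for p
    unfolding T_def using meager_affine_image[OF mA, of "real (r (p + K))" x] rK[of p] K(1) by simp
  then have "meager (M \<union> (\<Union>p. T p))" using M by (intro meager_Un meager_UN) auto
  moreover have "ball 0 1 \<subseteq> {-1..(1::real)}" by (auto simp: dist_real_def)
  ultimately have "\<not> {-1..(1::real)} \<subseteq> M \<union> (\<Union>p. T p)"
    using open_not_meager[of "ball (0::real) 1"] meager_subset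
    by (metis open_ball ball_eq_empty not_less zero_less_one)
  then obtain t :: real where t: "t \<in> {-1..1}" "t \<notin> M" "\<And>p. t \<notin> T p" by blast
  have "t \<notin> scale_shift (r (p + K)) A x" for p
  proof
    assume "t \<in> scale_shift (r (p + K)) A x"
    then obtain a where a: "a \<in> A" "t = real (r (p + K)) * (a - x)"
      unfolding scale_shift_def by auto
    have "real K * \<bar>a - x\<bar> \<le> real (r (p + K)) * \<bar>a - x\<bar>" using rK[of p] by (simp add: mult_right_mono)
    also have "\<dots> = \<bar>t\<bar>" using a(2) by (simp add: abs_mult)
    also have "\<dots> \<le> 1" using t(1) by auto
    finally have "\<bar>a - x\<bar> \<le> 1 / real K" using K(1) by (simp add: field_simps)
    then have "\<bar>a - x\<bar> < \<delta>" using K(2) by linarith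
    then have "t \<in> T p" unfolding T_def using a by (auto simp: dist_real_def)
    then show False using t(3) by blast
  qed
  then have "(\<lambda>p. indicator (scale_shift (r (p + K)) A x \<inter> {-1..1}) t :: real) = (\<lambda>p. 0)"
    by simp
  moreover have "(\<lambda>p. indicator (scale_shift (r (p + K)) A x \<inter> {-1..1}) t :: real) \<longlonglongrightarrow> 1"
    using lim t(1,2) by (intro LIMSEQ_ignore_initial_segment) blast
  ultimately show False using LIMSEQ_unique tendsto_const by fastforce
qed

lemma open_minus_meager_I_density_point:
  assumes "open U" "meager M" "x \<in> U - M"
  shows "I_density_point (U - M) x"
  unfolding I_density_point_def
proof (intro allI impI)
  fix n :: "nat \<Rightarrow> nat" assume n: "strict_mono n"
  have n_ge: "n p \<ge> p" for p using seq_suble[OF n] by blast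
  text \<open>The blow-ups of \<open>M\<close> at \<open>x\<close> form one meager exceptional set; indexing by \<open>Suc p\<close>
    keeps the scaling factors nonzero.\<close>
  define Mb where "Mb = (\<Union>p. (\<lambda>y. real (n (Suc p)) * (y - x)) ` M)"
  have "meager Mb" unfolding Mb_def
    using n_ge by (intro meager_UN meager_affine_image[OF assms(2)]) (auto intro: Suc_le_lessD less_le_trans)
  obtain d where d: "d > 0" "ball x d \<subseteq> U" using assms open_contains_ball by blast
  obtain K :: nat where K: "K > 0" "1 / real K < d"
    using d(1) by (metis reals_Archimedean gr0I inverse_eq_divide of_nat_0_less_iff zero_less_Suc)
  have "(\<lambda>p. indicator (scale_shift (n p) (U - M) x \<inter> {-1..1}) t :: real) \<longlonglongrightarrow> 1"
    if t: "t \<in> {-1..1} - Mb" for t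
  proof (rule tendsto_eventually, rule eventually_sequentiallyI[of K])
    fix p assume p: "K \<le> p"
    then have np: "real (n p) \<ge> real K" "real (n p) > 0" using n_ge[of p] K(1) by auto
    define a where "a = x + t / real (n p)"
    have ta: "t = real (n p) * (a - x)" unfolding a_def using np by simp
    have "\<bar>a - x\<bar> = \<bar>t\<bar> / real (n p)" unfolding a_def using np by (simp add: abs_divide)
    also have "\<dots> \<le> 1 / real (n p)" using t np by (intro divide_right_mono) auto
    also have "\<dots> \<le> 1 / real K" using np K(1) by (intro divide_left_mono) auto
    finally have "a \<in> U" using K(2) d(2) by (auto simp: dist_real_def)
    moreover have "a \<notin> M"
    proof
      assume "a \<in> M"
      then have "t \<in> (\<lambda>y. real (n (Suc (p - 1))) * (y - x)) ` M" using ta p K(1) by auto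
      then show False using t Mb_def by blast
    qed
    ultimately have "t \<in> scale_shift (n p) (U - M) x \<inter> {-1..1}"
      unfolding scale_shift_def using ta t by auto
    then show "indicator (scale_shift (n p) (U - M) x \<inter> {-1..1}) t = (1::real)" by simp
  qed
  then show "\<exists>r. strict_mono r \<and> (\<exists>N. meager N \<and> (\<forall>t\<in>{-1..1} - N.
      (\<lambda>p. indicator (scale_shift (n (r p)) (U - M) x \<inter> {-1..1}) t :: real) \<longlonglongrightarrow> 1))"
    using \<open>meager Mb\<close> strict_mono_id by (intro exI[of _ id]) auto
qed

lemma tau_star_subset_tau_I: "tau_star \<subseteq> tau_I"
proof
  fix V assume "V \<in> tau_star"
  then obtain U M where V: "V = U - M" "open U" "meager M" unfolding tau_star_def by blast
  have "baire_property V" unfolding baire_property_def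
    using V meager_subset[OF _ V(3), of "M \<inter> U"] by (intro exI[of _ U] exI[of _ "M \<inter> U"]) auto
  then show "V \<in> tau_I"
    unfolding tau_I_def using V open_minus_meager_I_density_point by auto
qed

lemma tau_I_open_contains_open_minus_meager:
  assumes "V \<in> tau_I" "x \<in> V" "c < x" "x < d"
  obtains U M where "open U" "U \<noteq> {}" "U \<subseteq> {c<..<d}" "meager M" "U - M \<subseteq> V"
proof -
  obtain U0 M0 where U0: "open U0" "meager M0" "V = (U0 - M0) \<union> (M0 - U0)"
    and dens: "I_density_point V x"
    using assms(1,2) unfolding tau_I_def baire_property_def by blast
  define \<delta> where "\<delta> = min (x - c) (d - x)"
  have "\<delta> > 0" using assms \<delta>_def by auto
  have "U0 \<inter> {c<..<d} \<noteq> {}"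
  proof
    assume U: "U0 \<inter> {c<..<d} = {}"
    have "V \<inter> ball x \<delta> \<subseteq> M0"
    proof
      fix v assume v: "v \<in> V \<inter> ball x \<delta>"
      then have "v \<in> {c<..<d}" using \<delta>_def by (auto simp: dist_real_def)
      then show "v \<in> M0" using v U U0(3) by auto
    qed
    then show False
      using I_density_point_not_meager[OF dens \<open>\<delta> > 0\<close>] meager_subset[OF _ U0(2)] by blast
  qed
  then show ?thesis using U0 by (intro that[of "U0 \<inter> {c<..<d}" M0]) auto
qed

lemma cont_pointsE:
  assumes "x \<in> cont_points \<sigma> f" "e > 0"
  obtains V where "V \<in> \<sigma>" "x \<in> V" "f ` V \<subseteq> ball (f x) e"
proof -
  have "open (ball (f x) e) \<and> f x \<in> ball (f x) e" using assms(2) by simp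
  then show thesis using assms(1) that unfolding cont_points_def by blast
qed

lemma swiatkowski_mono: assumes "\<sigma>1 \<subseteq> \<sigma>2" "swiatkowski \<sigma>1 f" shows "swiatkowski \<sigma>2 f"
proof -
  have "cont_points \<sigma>1 f \<subseteq> cont_points \<sigma>2 f" using assms(1) unfolding cont_points_def by blast
  then show ?thesis using assms(2) unfolding swiatkowski_def by blast
qed

definition osc_less_off_meager :: "(real \<Rightarrow> real) \<Rightarrow> real \<Rightarrow> real set \<Rightarrow> bool" where
  "osc_less_off_meager f e U \<longleftrightarrow> (\<exists>M. meager M \<and> (\<forall>y\<in>U - M. \<forall>y'\<in>U - M. \<bar>f y - f y'\<bar> < e))"

lemma swiatkowski_tau_I_osc_less_in_interval:
  assumes sw: "swiatkowski tau_I f" and "u < v" "e > 0"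
  obtains U where "open U" "U \<noteq> {}" "U \<subseteq> {u<..<v}" "osc_less_off_meager f e U"
proof (cases "\<forall>c\<in>{u<..<v}. \<forall>d\<in>{u<..<v}. f c = f d")
  case True
  have "\<bar>f y - f y'\<bar> < e" if "y \<in> {u<..<v} - {}" "y' \<in> {u<..<v} - {}" for y y'
  proof -
    have "f y = f y'" using True that by blast
    then show ?thesis using \<open>e > 0\<close> by simp
  qed
  then have "osc_less_off_meager f e {u<..<v}"
    unfolding osc_less_off_meager_def using meager_empty by blast
  then show ?thesis using \<open>u < v\<close> by (intro that[of "{u<..<v}"]) auto
next
  case False
  then obtain c d where cd: "c \<in> {u<..<v}" "d \<in> {u<..<v}" "f c \<noteq> f d" by blast
  then obtain p q where pq: "p \<in> {u<..<v}" "q \<in> {u<..<v}" "f p < f q"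
    using linorder_neq_iff by blast
  then obtain x where x: "x \<in> cont_points tau_I f" "min p q < x" "x < max p q"
    using sw[unfolded swiatkowski_def, rule_format, OF pq(3)] by blast
  have "e / 2 > 0" using \<open>e > 0\<close> by simp
  then obtain V where V: "V \<in> tau_I" "x \<in> V" "f ` V \<subseteq> ball (f x) (e/2)"
    by (rule cont_pointsE[OF x(1)])
  obtain U M where UM: "open U" "U \<noteq> {}" "U \<subseteq> {min p q<..<max p q}" "meager M" "U - M \<subseteq> V"
    by (rule tau_I_open_contains_open_minus_meager[OF V(1,2) x(2,3)])
  have "{min p q<..<max p q} \<subseteq> {u<..<v}" using pq(1,2) by auto
  then have "U \<subseteq> {u<..<v}" using UM(3) by blast
  moreover have "\<bar>f y - f y'\<bar> < e" if "y \<in> U - M" "y' \<in> U - M" for y y'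
  proof -
    have "f y \<in> ball (f x) (e/2)" "f y' \<in> ball (f x) (e/2)" using that UM(5) V(3) by blast+
    then show ?thesis unfolding mem_ball dist_real_def by linarith
  qed
  then have "osc_less_off_meager f e U" unfolding osc_less_off_meager_def using UM(4) by blast
  ultimately show ?thesis using UM(1,2) that by blast
qed

lemma swiatkowski_tau_I_meager_compl_osc_less:
  assumes sw: "swiatkowski tau_I f" and "e > 0"
  shows "meager (- \<Union>{U. open U \<and> osc_less_off_meager f e U})" (is "meager (- ?G)")
proof (rule nowhere_dense_imp_meager)
  have "interior (- ?G) = {}"
  proof (rule ccontr)
    assume "interior (- ?G) \<noteq> {}"
    then obtain y r where r: "r > 0" "ball y r \<subseteq> - ?G"
      by (meson all_not_in_conv mem_interior)
    obtain U where U: "open U" "U \<noteq> {}" "U \<subseteq> {y - r<..<y + r}" "osc_less_off_meager f e U"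
      using swiatkowski_tau_I_osc_less_in_interval[OF sw _ \<open>e > 0\<close>, of "y - r" "y + r"] r(1) by auto
    have "U \<subseteq> ball y r" using U(3) by (auto simp: dist_real_def abs_less_iff)
    then show False using r(2) U by blast
  qed
  moreover have "open ?G" by auto
  ultimately show "nowhere_dense (- ?G)"
    unfolding nowhere_dense_def by (simp add: closed_def)
qed

text \<open>By Lindelof's theorem, one meager set serves all of the (uncountably many) open sets at once.\<close>
lemma osc_less_off_common_meager:
  "\<exists>M. meager M \<and> (\<forall>z\<in>\<Union>{U. open U \<and> osc_less_off_meager f e U} - M.
          \<exists>U. open U \<and> z \<in> U \<and> (\<forall>y\<in>U - M. \<bar>f y - f z\<bar> < e))"
proof -
  obtain C where C: "C \<subseteq> {U. open U \<and> osc_less_off_meager f e U}" "countable C"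
    "\<Union>C = \<Union>{U. open U \<and> osc_less_off_meager f e U}"
    using Lindelof[of "{U. open U \<and> osc_less_off_meager f e U}"] by blast
  have "\<forall>U\<in>C. \<exists>M. meager M \<and> (\<forall>y\<in>U - M. \<forall>y'\<in>U - M. \<bar>f y - f y'\<bar> < e)"
    using C(1) unfolding osc_less_off_meager_def by auto
  then obtain MU where MU: "\<forall>U\<in>C.
      meager (MU U) \<and> (\<forall>y\<in>U - MU U. \<forall>y'\<in>U - MU U. \<bar>f y - f y'\<bar> < e)"
    by (rule exE[OF bchoice])
  have "\<exists>U. open U \<and> z \<in> U \<and> (\<forall>y\<in>U - (\<Union>U\<in>C. MU U). \<bar>f y - f z\<bar> < e)"
    if z: "z \<in> \<Union>{U. open U \<and> osc_less_off_meager f e U} - (\<Union>U\<in>C. MU U)" for z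
  proof -
    obtain U where U: "U \<in> C" "z \<in> U - MU U" using z C(3) by auto
    have "\<bar>f y - f z\<bar> < e" if "y \<in> U - (\<Union>U\<in>C. MU U)" for y
      using MU U that by blast
    then show ?thesis using U C(1) by blast
  qed
  moreover have "meager (\<Union>U\<in>C. MU U)" using C(2) MU by (intro meager_UN) auto
  ultimately show ?thesis by blast
qed

lemma meager_compl_cont_points_tau_star:
  assumes "\<And>e. e > 0 \<Longrightarrow> meager (- \<Union>{U. open U \<and> osc_less_off_meager f e U})"
  shows "meager (- cont_points tau_star f)"
proof -
  define G where "G k = \<Union>{U. open U \<and> osc_less_off_meager f (1 / Suc k) U}" for k :: nat
  have "\<forall>k. \<exists>M. meager M \<and>
          (\<forall>z\<in>G k - M. \<exists>U. open U \<and> z \<in> U \<and> (\<forall>y\<in>U - M. \<bar>f y - f z\<bar> < 1 / Suc k))"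
    unfolding G_def using osc_less_off_common_meager by blast
  then obtain M where M: "\<forall>k. meager (M k) \<and>
      (\<forall>z\<in>G k - M k. \<exists>U. open U \<and> z \<in> U \<and> (\<forall>y\<in>U - M k. \<bar>f y - f z\<bar> < 1 / Suc k))"
    by (rule exE[OF choice])
  have "z \<in> cont_points tau_star f" if z: "z \<notin> (\<Union>k. - G k) \<union> (\<Union>k. M k)" for z
    unfolding cont_points_def
  proof (intro CollectI allI impI)
    fix W assume "open W \<and> f z \<in> W"
    then obtain \<delta> where \<delta>: "\<delta> > 0" "ball (f z) \<delta> \<subseteq> W" using open_contains_ball by blast
    obtain k :: nat where k: "1 / Suc k < \<delta>" using reals_Archimedean \<delta>(1) by (metis inverse_eq_divide)
    have "z \<in> G k - M k" using z by blast
    then obtain U where U: "open U" "z \<in> U" "\<forall>y\<in>U - M k. \<bar>f y - f z\<bar> < 1 / Suc k"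
      using M by blast
    have "U - M k \<in> tau_star" unfolding tau_star_def using U(1) M by blast
    moreover have "f y \<in> W" if "y \<in> U - M k" for y
    proof -
      have "\<bar>f y - f z\<bar> < 1 / Suc k" using U(3) that by blast
      then have "dist (f y) (f z) < \<delta>" unfolding dist_real_def using k by linarith
      then show ?thesis using \<delta>(2) by (simp add: dist_commute subset_iff)
    qed
    ultimately show "\<exists>V\<in>tau_star. z \<in> V \<and> f ` V \<subseteq> W"
      using U(2) \<open>z \<in> G k - M k\<close> by (intro bexI[of _ "U - M k"]) auto
  qed
  then have "- cont_points tau_star f \<subseteq> (\<Union>k. - G k) \<union> (\<Union>k. M k)" by blast
  moreover have "meager (- G k)" for k unfolding G_def by (rule assms) simp
  then have "meager ((\<Union>k. - G k) \<union> (\<Union>k. M k))" using M by (intro meager_Un meager_UN) auto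
  ultimately show ?thesis by (rule meager_subset)
qed

lemma swiatkowski_tau_I_imp_tau_star:
  assumes sw: "swiatkowski tau_I f" shows "swiatkowski tau_star f"
  unfolding swiatkowski_def
proof (intro allI impI)
  fix a b assume "f a < f b"
  then obtain x where x: "x \<in> cont_points tau_I f" "min a b < x" "x < max a b" "f a < f x" "f x < f b"
    using sw[unfolded swiatkowski_def, rule_format] by blast
  define \<epsilon> where "\<epsilon> = min (f x - f a) (f b - f x)"
  have "\<epsilon> > 0" using x(4,5) \<epsilon>_def by simp
  then obtain V where V: "V \<in> tau_I" "x \<in> V" "f ` V \<subseteq> ball (f x) \<epsilon>"
    by (rule cont_pointsE[OF x(1)])
  obtain U M where U: "open U" "U \<noteq> {}" "U \<subseteq> {min a b<..<max a b}" "meager M" "U - M \<subseteq> V"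
    by (rule tau_I_open_contains_open_minus_meager[OF V(1,2) x(2,3)])
  have "meager (M \<union> - cont_points tau_star f)"
    using meager_compl_cont_points_tau_star[OF swiatkowski_tau_I_meager_compl_osc_less[OF sw]]
    by (rule meager_Un[OF U(4)])
  then have "\<not> U \<subseteq> M \<union> - cont_points tau_star f"
    using open_not_meager[OF U(1,2)] meager_subset[of U] by blast
  then obtain z where z: "z \<in> U" "z \<notin> M" "z \<in> cont_points tau_star f" by blast
  then have "f z \<in> ball (f x) \<epsilon>" using U(5) V(3) by blast
  then have "f a < f z" "f z < f b" unfolding \<epsilon>_def mem_ball dist_real_def by linarith+
  moreover have "min a b < z" "z < max a b" using z(1) U(3) by auto
  ultimately show "\<exists>z\<in>cont_points tau_star f. min a b < z \<and> z < max a b \<and> f a < f z \<and> f z < f b"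
    using z(3) by blast
qed

theorem mainTheorem16:
  "{f :: real \<Rightarrow> real. swiatkowski tau_I f} = {f. swiatkowski tau_star f}"
  using swiatkowski_tau_I_imp_tau_star swiatkowski_mono[OF tau_star_subset_tau_I] by blast

end
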